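(* In a synchronized communication system of $n$ robots, let $IR$ be its isolation-resilience and let $SN$ be the maximum possible number of starving robots in the system. Then $SN+IR=n-1$.
   Context: Model. A system consists of pairwise disjoint unit circles $C_1,\dots,C_n$ in the plane (trajectories) and a communication range $r>0$. Its communication graph $G$ has vertex set $\{C_1,\dots,C_n\}$, $C_i,C_j$ adjacent iff the distance between their centres is at most $2+r$. Positions on a circle are angles (mod $2\pi$). For an edge $(i,j)$, the link position $\phi_{ij}$ is the angle of the point of $C_i$ closest to $C_j$. A schedule $F=(f,g)$ assigns each circle a starting angle $f(C_i)$ and direction $g(C_i)\in\{1,-1\}$; a robot following it on $C_i$ is at $f(C_i)+g(C_i)2\pi t$ at time $t$. $F$ is a synchronization schedule if $g(C_i)=-g(C_j)$ for adjacent circles and robots following $F$ on adjacent $C_i,C_j$ are at $\phi_{ij},\phi_{ji}$ at exactly the same times. A synchronized communication system (SCS) consists of $n$ robots, initially one per circle, following a synchronization schedule, with the switching rule: when a robot on $C_i$ reaches $\phi_{ij}$ and $C_j$ is empty, it instantly passes to $C_j$ and follows the schedule of $C_j$; if $C_j$ has a robot, they meet and each stays on its circle. A partial SCS arises by letting some robots leave (possibly at different times); remaining robots never leave. A surviving robot $u$ starves if every time $u$ arrives at a link position $\phi_{ij}$ of its current circle $C_i$, the circle $C_j$ is empty; the system is in starvation state if all surviving robots starve. The isolation-resilience is the largest $k$ such that, whichever $k$ robots leave, the system does not fall into starvation state. The maximum possible number of starving robots is taken over all partial SCSs obtained from the given SCS by letting robots leave. *)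

theory Defs
  imports "HOL-Analysis.Analysis"
begin

text \<open>Circles C_0,...,C_(n-1) are unit circles with centres c i (complex plane).
  Robots are numbered 0..n-1; robot u starts on circle u.
  Angles are reals; two angles denote the same position iff their cis agree (mod 2 pi).\<close>

definition valid_system :: "nat \<Rightarrow> (nat \<Rightarrow> complex) \<Rightarrow> real \<Rightarrow> bool" where
  "valid_system n c r \<longleftrightarrow> r > 0 \<and> (\<forall>i<n. \<forall>j<n. i \<noteq> j \<longrightarrow> dist (c i) (c j) > 2)"

definition adj :: "(nat \<Rightarrow> complex) \<Rightarrow> real \<Rightarrow> nat \<Rightarrow> nat \<Rightarrow> bool" where
  "adj c r i j \<longleftrightarrow> i \<noteq> j \<and> dist (c i) (c j) \<le> 2 + r"

text \<open>Link position phi_ij: angle of the point of C_i closest to C_j.\<close>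
definition link_pos :: "(nat \<Rightarrow> complex) \<Rightarrow> nat \<Rightarrow> nat \<Rightarrow> real" where
  "link_pos c i j = Arg (c j - c i)"

definition robot_pos :: "(nat \<Rightarrow> real) \<Rightarrow> (nat \<Rightarrow> int) \<Rightarrow> nat \<Rightarrow> real \<Rightarrow> real" where
  "robot_pos f g i t = f i + of_int (g i) * 2 * pi * t"

definition at_link :: "(nat \<Rightarrow> complex) \<Rightarrow> (nat \<Rightarrow> real) \<Rightarrow> (nat \<Rightarrow> int) \<Rightarrow> nat \<Rightarrow> nat \<Rightarrow> real \<Rightarrow> bool" where
  "at_link c f g i j t \<longleftrightarrow> cis (robot_pos f g i t) = cis (link_pos c i j)"

definition is_sync_schedule ::
  "nat \<Rightarrow> (nat \<Rightarrow> complex) \<Rightarrow> real \<Rightarrow> (nat \<Rightarrow> real) \<Rightarrow> (nat \<Rightarrow> int) \<Rightarrow> bool" where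
  "is_sync_schedule n c r f g \<longleftrightarrow>
     (\<forall>i<n. g i = 1 \<or> g i = -1) \<and>
     (\<forall>i<n. \<forall>j<n. adj c r i j \<longrightarrow>
         g i = - g j \<and> (\<forall>t. at_link c f g i j t \<longleftrightarrow> at_link c f g j i t))"

definition event_times ::
  "nat \<Rightarrow> (nat \<Rightarrow> complex) \<Rightarrow> real \<Rightarrow> (nat \<Rightarrow> real) \<Rightarrow> (nat \<Rightarrow> int) \<Rightarrow> real set" where
  "event_times n c r f g = {t. 0 \<le> t \<and> (\<exists>i<n. \<exists>j<n. adj c r i j \<and> at_link c f g i j t)}"

text \<open>Configuration: robot \<mapsto> circle it is on (None = robot has left / absent).\<close>
type_synonym config = "nat \<Rightarrow> nat option"

definition occupied :: "config \<Rightarrow> nat \<Rightarrow> bool" where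
  "occupied \<sigma> j \<longleftrightarrow> (\<exists>u. \<sigma> u = Some j)"

definition move ::
  "nat \<Rightarrow> (nat \<Rightarrow> complex) \<Rightarrow> real \<Rightarrow> (nat \<Rightarrow> real) \<Rightarrow> (nat \<Rightarrow> int) \<Rightarrow> real \<Rightarrow> config \<Rightarrow> config" where
  "move n c r f g t \<sigma> = (\<lambda>u. case \<sigma> u of
      None \<Rightarrow> None
    | Some i \<Rightarrow>
        if (\<exists>j<n. adj c r i j \<and> at_link c f g i j t \<and> \<not> occupied \<sigma> j)
        then Some (THE j. j < n \<and> adj c r i j \<and> at_link c f g i j t \<and> \<not> occupied \<sigma> j)
        else Some i)"

text \<open>Departures: robots in L leave at time tau u (they take part in no event at a time \<ge> tau u).\<close>
definition alive :: "nat set \<Rightarrow> (nat \<Rightarrow> real) \<Rightarrow> nat \<Rightarrow> real \<Rightarrow> bool" where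
  "alive L \<tau> u t \<longleftrightarrow> u \<notin> L \<or> t < \<tau> u"

definition kill :: "nat set \<Rightarrow> (nat \<Rightarrow> real) \<Rightarrow> real \<Rightarrow> config \<Rightarrow> config" where
  "kill L \<tau> t \<sigma> = (\<lambda>u. if alive L \<tau> u t then \<sigma> u else None)"

definition init_config :: "nat \<Rightarrow> config" where
  "init_config n = (\<lambda>u. if u < n then Some u else None)"

definition state_before ::
  "nat \<Rightarrow> (nat \<Rightarrow> complex) \<Rightarrow> real \<Rightarrow> (nat \<Rightarrow> real) \<Rightarrow> (nat \<Rightarrow> int) \<Rightarrow>
   nat set \<Rightarrow> (nat \<Rightarrow> real) \<Rightarrow> real \<Rightarrow> config" where
  "state_before n c r f g L \<tau> t =
     foldl (\<lambda>\<sigma> s. move n c r f g s (kill L \<tau> s \<sigma>)) (init_config n)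
       (sorted_list_of_set {s \<in> event_times n c r f g. s < t})"

definition pre_state ::
  "nat \<Rightarrow> (nat \<Rightarrow> complex) \<Rightarrow> real \<Rightarrow> (nat \<Rightarrow> real) \<Rightarrow> (nat \<Rightarrow> int) \<Rightarrow>
   nat set \<Rightarrow> (nat \<Rightarrow> real) \<Rightarrow> real \<Rightarrow> config" where
  "pre_state n c r f g L \<tau> t = kill L \<tau> t (state_before n c r f g L \<tau> t)"

definition starves_at ::
  "nat \<Rightarrow> (nat \<Rightarrow> complex) \<Rightarrow> real \<Rightarrow> (nat \<Rightarrow> real) \<Rightarrow> (nat \<Rightarrow> int) \<Rightarrow>
   nat set \<Rightarrow> (nat \<Rightarrow> real) \<Rightarrow> nat \<Rightarrow> real \<Rightarrow> bool" where
  "starves_at n c r f g L \<tau> u t \<longleftrightarrow>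
     (\<forall>i j. pre_state n c r f g L \<tau> t u = Some i \<longrightarrow> j < n \<longrightarrow> adj c r i j \<longrightarrow>
        at_link c f g i j t \<longrightarrow> \<not> occupied (pre_state n c r f g L \<tau> t) j)"

definition starves_from ::
  "nat \<Rightarrow> (nat \<Rightarrow> complex) \<Rightarrow> real \<Rightarrow> (nat \<Rightarrow> real) \<Rightarrow> (nat \<Rightarrow> int) \<Rightarrow>
   nat set \<Rightarrow> (nat \<Rightarrow> real) \<Rightarrow> real \<Rightarrow> nat \<Rightarrow> bool" where
  "starves_from n c r f g L \<tau> T u \<longleftrightarrow>
     (\<forall>t \<in> event_times n c r f g. T \<le> t \<longrightarrow> starves_at n c r f g L \<tau> u t)"

definition surviving :: "nat \<Rightarrow> nat set \<Rightarrow> nat \<Rightarrow> bool" where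
  "surviving n L u \<longleftrightarrow> u < n \<and> u \<notin> L"

definition leave_schedule :: "nat \<Rightarrow> nat set \<Rightarrow> (nat \<Rightarrow> real) \<Rightarrow> bool" where
  "leave_schedule n L \<tau> \<longleftrightarrow> L \<subseteq> {..<n} \<and> (\<forall>u\<in>L. 0 \<le> \<tau> u)"

definition after_departures :: "nat set \<Rightarrow> (nat \<Rightarrow> real) \<Rightarrow> real \<Rightarrow> bool" where
  "after_departures L \<tau> T \<longleftrightarrow> (\<forall>u\<in>L. \<tau> u \<le> T)"

definition num_starving ::
  "nat \<Rightarrow> (nat \<Rightarrow> complex) \<Rightarrow> real \<Rightarrow> (nat \<Rightarrow> real) \<Rightarrow> (nat \<Rightarrow> int) \<Rightarrow>
   nat set \<Rightarrow> (nat \<Rightarrow> real) \<Rightarrow> real \<Rightarrow> nat" where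
  "num_starving n c r f g L \<tau> T = card {u. surviving n L u \<and> starves_from n c r f g L \<tau> T u}"

definition starvation_state ::
  "nat \<Rightarrow> (nat \<Rightarrow> complex) \<Rightarrow> real \<Rightarrow> (nat \<Rightarrow> real) \<Rightarrow> (nat \<Rightarrow> int) \<Rightarrow>
   nat set \<Rightarrow> (nat \<Rightarrow> real) \<Rightarrow> real \<Rightarrow> bool" where
  "starvation_state n c r f g L \<tau> T \<longleftrightarrow>
     (\<forall>u. surviving n L u \<longrightarrow> starves_from n c r f g L \<tau> T u)"

definition falls_into_starvation ::
  "nat \<Rightarrow> (nat \<Rightarrow> complex) \<Rightarrow> real \<Rightarrow> (nat \<Rightarrow> real) \<Rightarrow> (nat \<Rightarrow> int) \<Rightarrow>
   nat set \<Rightarrow> (nat \<Rightarrow> real) \<Rightarrow> bool" where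
  "falls_into_starvation n c r f g L \<tau> \<longleftrightarrow>
     (\<exists>T. after_departures L \<tau> T \<and> starvation_state n c r f g L \<tau> T)"

definition max_starving ::
  "nat \<Rightarrow> (nat \<Rightarrow> complex) \<Rightarrow> real \<Rightarrow> (nat \<Rightarrow> real) \<Rightarrow> (nat \<Rightarrow> int) \<Rightarrow> nat" where
  "max_starving n c r f g =
     Max {num_starving n c r f g L \<tau> T | L \<tau> T. leave_schedule n L \<tau> \<and> after_departures L \<tau> T}"

definition isolation_resilience ::
  "nat \<Rightarrow> (nat \<Rightarrow> complex) \<Rightarrow> real \<Rightarrow> (nat \<Rightarrow> real) \<Rightarrow> (nat \<Rightarrow> int) \<Rightarrow> nat" where
  "isolation_resilience n c r f g =
     Max {k. k \<le> n \<and> (\<forall>L \<tau>. leave_schedule n L \<tau> \<and> card L = k \<longrightarrow>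
                              \<not> falls_into_starvation n c r f g L \<tau>)}"

end

theory Submission
  imports Defs
begin

text \<open>If k robots leave and the system falls into starvation state, all n - k survivors starve,
  so n - k \<le> SN. Conversely, let S be a set of robots starving from time T in some partial
  system, and let every robot outside S leave at a time T' \<ge> T. After T' a robot of S only
  ever meets empty circles in the original run; removing robots only empties circles, so the
  robots of S behave exactly as before and still starve. This yields a starvation state with
  n - |S| departures. Hence whichever k robots leave, starvation is avoided iff n - k > SN,
  i.e. IR = n - 1 - SN, which is meaningful because SN \<le> n - 1: in the complete system no
  robot ever moves, so a robot with a neighbour always finds it occupied.\<close>

lemma sorted_list_of_set_insert_greatest:
  fixes b :: "'a::linorder"
  assumes "finite A" and "\<forall>a\<in>A. a < b"
  shows "sorted_list_of_set (insert b A) = sorted_list_of_set A @ [b]"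
  using assms
  by (subst sorted_list_of_set_unique[symmetric]) (auto simp: sorted_wrt_append)

lemma occupied_map_le: "\<sigma>' \<subseteq>\<^sub>m \<sigma> \<Longrightarrow> occupied \<sigma>' j \<Longrightarrow> occupied \<sigma> j"
  unfolding occupied_def map_le_def by (metis domI)

lemma occupied_init_config: "j < n \<Longrightarrow> occupied (init_config n) j"
  unfolding occupied_def init_config_def by metis

lemma state_before_beyond:
  assumes "n \<le> u"
  shows "state_before n c r f g L \<tau> t u = None"
proof -
  have "foldl (\<lambda>\<sigma> s. move n c r f g s (kill L \<tau> s \<sigma>)) \<sigma> xs u = None" if "\<sigma> u = None" for \<sigma> xs
    using that by (induction xs arbitrary: \<sigma>) (simp_all add: move_def kill_def)
  then show ?thesis
    using assms unfolding state_before_def by (simp add: init_config_def)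
qed

lemma state_before_no_events:
  assumes "card {s \<in> event_times n c r f g. s < t} = 0"
  shows "state_before n c r f g L \<tau> t = init_config n"
proof -
  have "sorted_list_of_set {s \<in> event_times n c r f g. s < t} = []"
    using assms by (metis length_0_conv length_sorted_list_of_set)
  then show ?thesis
    unfolding state_before_def by simp
qed

lemma state_before_last_event:
  assumes "finite {s \<in> event_times n c r f g. s < t}"
    and "b \<in> event_times n c r f g" and "b < t"
    and "\<forall>s \<in> event_times n c r f g. s < t \<longrightarrow> s \<le> b"
  shows "state_before n c r f g L \<tau> t = move n c r f g b (pre_state n c r f g L \<tau> b)"
proof -
  let ?E = "event_times n c r f g"
  have split: "{s \<in> ?E. s < t} = insert b {s \<in> ?E. s < b}"
    using assms(2-4) by auto
  then have "finite {s \<in> ?E. s < b}"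
    using assms(1) by simp
  then have "sorted_list_of_set {s \<in> ?E. s < t} = sorted_list_of_set {s \<in> ?E. s < b} @ [b]"
    unfolding split by (rule sorted_list_of_set_insert_greatest) auto
  then show ?thesis
    unfolding state_before_def pre_state_def by simp
qed

lemma state_before_no_departures: "state_before n c r f g {} \<tau> t = init_config n"
proof -
  have "\<not> (\<exists>j<n. adj c r i j \<and> at_link c f g i j s \<and> \<not> occupied (init_config n) j)" for i s
    using occupied_init_config by blast
  then have stay: "move n c r f g s (kill {} \<tau> s (init_config n)) = init_config n" for s
    by (auto simp: move_def kill_def alive_def fun_eq_iff split: option.split)
  have "foldl (\<lambda>\<sigma> s. move n c r f g s (kill {} \<tau> s \<sigma>)) (init_config n) xs = init_config n" for xs
    by (induction xs) (simp_all add: stay)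
  then show ?thesis
    unfolding state_before_def by blast
qed

lemma move_map_le_starving:
  assumes "\<sigma>' \<subseteq>\<^sub>m \<sigma>" and "\<sigma>' u = \<sigma> u"
    and "\<forall>i j. \<sigma> u = Some i \<longrightarrow> j < n \<longrightarrow> adj c r i j \<longrightarrow> at_link c f g i j t \<longrightarrow>
               \<not> occupied \<sigma> j"
  shows "move n c r f g t \<sigma>' u = move n c r f g t \<sigma> u"
proof (cases "\<sigma> u")
  case (Some i)
  then have "(j < n \<and> adj c r i j \<and> at_link c f g i j t \<and> \<not> occupied \<sigma>' j) \<longleftrightarrow>
             (j < n \<and> adj c r i j \<and> at_link c f g i j t \<and> \<not> occupied \<sigma> j)" for j
    using assms(1,3) occupied_map_le by blast
  then show ?thesis
    unfolding move_def by (simp only: Some assms(2) option.case)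
qed (simp add: move_def assms(2))

lemma kill_extra_departures:
  assumes "L \<subseteq> L'" and "\<forall>u. u \<notin> L' \<longrightarrow> \<sigma>' u = \<sigma> u"
  shows "u \<notin> L' \<Longrightarrow> kill L' \<tau>' t \<sigma>' u = kill L \<tau> t \<sigma> u"
    and "\<forall>u\<in>L'. \<tau>' u \<le> t \<Longrightarrow> kill L' \<tau>' t \<sigma>' \<subseteq>\<^sub>m kill L \<tau> t \<sigma>"
  using assms by (auto simp: kill_def alive_def map_le_def subset_iff)

lemma starves_at_antimono:
  assumes "pre_state n c r f g L' \<tau>' t \<subseteq>\<^sub>m pre_state n c r f g L \<tau> t"
    and "starves_at n c r f g L \<tau> u t"
  shows "starves_at n c r f g L' \<tau>' u t"
  using assms occupied_map_le unfolding starves_at_def map_le_def by (metis domI)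

subsection \<open>Letting the non-starving robots leave\<close>

context
  fixes n :: nat and c :: "nat \<Rightarrow> complex" and r :: real
    and f :: "nat \<Rightarrow> real" and g :: "nat \<Rightarrow> int"
    and L L' :: "nat set" and \<tau> \<tau>' :: "nat \<Rightarrow> real" and T' :: real
  assumes departures_sub: "L \<subseteq> L'"
    and departed: "after_departures L \<tau> T'"
    and new_departures: "\<forall>u\<in>L'. \<tau>' u = (if u \<in> L then \<tau> u else T')"
    and remaining_starve: "\<forall>u<n. u \<notin> L' \<longrightarrow> starves_from n c r f g L \<tau> T' u"
begin

lemma state_before_extra_departures:
  assumes "u \<notin> L' \<or> t \<le> T'"
  shows "state_before n c r f g L' \<tau>' t u = state_before n c r f g L \<tau> t u"
  using assms
proof (induction "card {s \<in> event_times n c r f g. s < t}" arbitrary: t u rule: less_induct)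
  case less
  let ?E = "event_times n c r f g"
  show ?case
  proof (cases "card {s \<in> ?E. s < t} = 0")
    case True
    then show ?thesis by (simp add: state_before_no_events)
  next
    case False
    then have fin: "finite {s \<in> ?E. s < t}" and nonempty: "{s \<in> ?E. s < t} \<noteq> {}"
      by (simp_all add: card_eq_0_iff)
    define b where "b = Max {s \<in> ?E. s < t}"
    have b: "b \<in> ?E" "b < t" "\<forall>s \<in> ?E. s < t \<longrightarrow> s \<le> b"
      using Max_in[OF fin nonempty] Max_ge[OF fin] unfolding b_def by auto
    have "{s \<in> ?E. s < b} \<subset> {s \<in> ?E. s < t}"
      using b by auto
    then have IH: "v \<notin> L' \<or> b \<le> T' \<Longrightarrow>
                   state_before n c r f g L' \<tau>' b v = state_before n c r f g L \<tau> b v" for v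
      by (intro less.hyps psubset_card_mono fin)
    have last_event:
      "state_before n c r f g L' \<tau>' t = move n c r f g b (pre_state n c r f g L' \<tau>' b)"
      "state_before n c r f g L \<tau> t = move n c r f g b (pre_state n c r f g L \<tau> b)"
      by (rule state_before_last_event[OF fin b])+
    show ?thesis
    proof (cases "b < T'")
      case True
      then have "alive L' \<tau>' v b \<longleftrightarrow> alive L \<tau> v b" for v
        using departures_sub new_departures unfolding alive_def by force
      then have "kill L' \<tau>' b = kill L \<tau> b"
        unfolding kill_def by presburger
      moreover have "state_before n c r f g L' \<tau>' b = state_before n c r f g L \<tau> b"
        using IH True by (simp add: fun_eq_iff)
      ultimately show ?thesis
        unfolding last_event pre_state_def by simp
    next
      case False
      then have "u \<notin> L'"
        using less.prems b(2) by auto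
      have agree: "\<forall>v. v \<notin> L' \<longrightarrow>
                     state_before n c r f g L' \<tau>' b v = state_before n c r f g L \<tau> b v"
        using IH by blast
      have "\<forall>v\<in>L'. \<tau>' v \<le> b"
        using False departed new_departures by (auto simp: after_departures_def)
      then have le: "pre_state n c r f g L' \<tau>' b \<subseteq>\<^sub>m pre_state n c r f g L \<tau> b"
        unfolding pre_state_def by (rule kill_extra_departures(2)[OF departures_sub agree])
      have eq: "pre_state n c r f g L' \<tau>' b u = pre_state n c r f g L \<tau> b u"
        unfolding pre_state_def by (rule kill_extra_departures(1)[OF departures_sub agree \<open>u \<notin> L'\<close>])
      show ?thesis
      proof (cases "u < n")
        case True
        then have "starves_at n c r f g L \<tau> u b"
          using remaining_starve \<open>u \<notin> L'\<close> b(1) False by (auto simp: starves_from_def)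
        then show ?thesis
          unfolding last_event by (intro move_map_le_starving[OF le eq]) (simp add: starves_at_def)
      next
        case False
        then show ?thesis
          by (simp add: last_event move_def pre_state_def kill_def state_before_beyond)
      qed
    qed
  qed
qed

lemma starvation_state_extra_departures: "starvation_state n c r f g L' \<tau>' T'"
  unfolding starvation_state_def starves_from_def
proof (intro allI impI ballI)
  fix u t
  assume "surviving n L' u" and t: "t \<in> event_times n c r f g" "T' \<le> t"
  then have "starves_at n c r f g L \<tau> u t"
    using remaining_starve by (auto simp: surviving_def starves_from_def)
  have "\<forall>v\<in>L'. \<tau>' v \<le> t"
    using t(2) departed new_departures by (auto simp: after_departures_def)
  moreover have "\<forall>v. v \<notin> L' \<longrightarrow>
                   state_before n c r f g L' \<tau>' t v = state_before n c r f g L \<tau> t v"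
    by (simp add: state_before_extra_departures)
  ultimately have "pre_state n c r f g L' \<tau>' t \<subseteq>\<^sub>m pre_state n c r f g L \<tau> t"
    unfolding pre_state_def by (intro kill_extra_departures(2)[OF departures_sub])
  then show "starves_at n c r f g L' \<tau>' u t"
    using \<open>starves_at n c r f g L \<tau> u t\<close> by (rule starves_at_antimono)
qed

end

subsection \<open>The complete system\<close>

lemma at_link_arbitrarily_late:
  assumes "g i = 1 \<or> g i = -1"
  shows "\<exists>t\<ge>T. at_link c f g i j t"
proof -
  define d where "d = (link_pos c i j - f i) / (2 * pi)"
  define m :: nat where "m = nat \<lceil>\<bar>T\<bar> + \<bar>d\<bar>\<rceil>"
  define t where "t = of_int (g i) * d + real m"
  have g_sq: "of_int (g i) * of_int (g i) = (1::real)" and g_abs: "\<bar>of_int (g i) * d\<bar> = \<bar>d\<bar>"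
    using assms by auto
  have "T \<le> t"
    using g_abs unfolding t_def m_def by linarith
  have "of_int (g i) * 2 * pi * t =
        (of_int (g i) * of_int (g i)) * (2 * pi * d) + 2 * pi * (of_int (g i) * real m)"
    unfolding t_def by (simp add: algebra_simps)
  also have "\<dots> = link_pos c i j - f i + 2 * pi * of_int (g i * int m)"
    using g_sq unfolding d_def by simp
  finally have "robot_pos f g i t = link_pos c i j + 2 * pi * of_int (g i * int m)"
    unfolding robot_pos_def by simp
  then have "cis (robot_pos f g i t) = cis (link_pos c i j)"
    by (simp add: cis_mult[symmetric] cis_multiple_2pi)
  then show ?thesis
    using \<open>T \<le> t\<close> unfolding at_link_def by blast
qed

lemma never_starving_without_departures:
  assumes "g i = 1 \<or> g i = -1" and "i < n" "j < n" "adj c r i j"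
  shows "\<not> starves_from n c r f g {} \<tau> T i"
proof
  assume starving: "starves_from n c r f g {} \<tau> T i"
  obtain t where t: "max T 0 \<le> t" "at_link c f g i j t"
    using at_link_arbitrarily_late[of g i, OF assms(1)] by blast
  then have "t \<in> event_times n c r f g"
    using assms(2-4) unfolding event_times_def by auto
  then have "starves_at n c r f g {} \<tau> i t"
    using starving t(1) unfolding starves_from_def by auto
  moreover have "pre_state n c r f g {} \<tau> t = init_config n"
    unfolding pre_state_def state_before_no_departures by (simp add: kill_def alive_def)
  moreover have "occupied (init_config n) j"
    using assms(3) by (rule occupied_init_config)
  ultimately show False
    using assms(2-4) t(2) unfolding starves_at_def by (simp add: init_config_def)
qed

lemma num_starving_le:
  assumes "leave_schedule n L \<tau>"
    and "g i = 1 \<or> g i = -1" and "i < n" "j < n" "adj c r i j"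
  shows "num_starving n c r f g L \<tau> T \<le> n - 1"
proof -
  obtain x where x: "x < n" "\<not> (surviving n L x \<and> starves_from n c r f g L \<tau> T x)"
  proof (cases "L = {}")
    case True
    then show ?thesis
      using that never_starving_without_departures[of g i, OF assms(2-5)] assms(3) by blast
  next
    case False
    then show ?thesis
      using that assms(1) unfolding leave_schedule_def surviving_def by blast
  qed
  then have "{u. surviving n L u \<and> starves_from n c r f g L \<tau> T u} \<subseteq> {..<n} - {x}"
    by (auto simp: surviving_def)
  from card_mono[OF _ this] show ?thesis
    using x(1) unfolding num_starving_def by simp
qed

lemma finite_num_starving_values:
  "finite {num_starving n c r f g L \<tau> T | L \<tau> T. leave_schedule n L \<tau> \<and> after_departures L \<tau> T}"
proof (rule finite_subset)
  have "num_starving n c r f g L \<tau> T \<le> n" for L \<tau> T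
    using card_mono[of "{..<n}" "{u. surviving n L u \<and> starves_from n c r f g L \<tau> T u}"]
    unfolding num_starving_def surviving_def by auto
  then show "{num_starving n c r f g L \<tau> T | L \<tau> T.
               leave_schedule n L \<tau> \<and> after_departures L \<tau> T} \<subseteq> {..n}"
    by auto
qed simp

lemma max_starving_ge:
  assumes "leave_schedule n L \<tau>" and "after_departures L \<tau> T"
  shows "num_starving n c r f g L \<tau> T \<le> max_starving n c r f g"
  unfolding max_starving_def using assms by (intro Max_ge finite_num_starving_values) blast

lemma max_starving_attained:
  obtains L \<tau> T where "leave_schedule n L \<tau>" and "after_departures L \<tau> T"
    and "num_starving n c r f g L \<tau> T = max_starving n c r f g"
proof -
  have "num_starving n c r f g {} (\<lambda>_. 0) 0
          \<in> {num_starving n c r f g L \<tau> T | L \<tau> T. leave_schedule n L \<tau> \<and> after_departures L \<tau> T}"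
    unfolding leave_schedule_def after_departures_def by blast
  then have "max_starving n c r f g
          \<in> {num_starving n c r f g L \<tau> T | L \<tau> T. leave_schedule n L \<tau> \<and> after_departures L \<tau> T}"
    unfolding max_starving_def by (intro Max_in finite_num_starving_values) blast
  then show ?thesis
    using that by auto
qed

lemma survivors_le_max_starving:
  assumes "leave_schedule n L \<tau>" and "falls_into_starvation n c r f g L \<tau>"
  shows "n - card L \<le> max_starving n c r f g"
proof -
  obtain T where T: "after_departures L \<tau> T" "starvation_state n c r f g L \<tau> T"
    using assms(2) unfolding falls_into_starvation_def by blast
  have "{u. surviving n L u \<and> starves_from n c r f g L \<tau> T u} = {..<n} - L"
    using T(2) unfolding starvation_state_def surviving_def by auto
  moreover have "L \<subseteq> {..<n}"
    using assms(1) unfolding leave_schedule_def by simp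
  ultimately have "num_starving n c r f g L \<tau> T = n - card L"
    unfolding num_starving_def by (simp add: card_Diff_subset finite_subset)
  moreover have "num_starving n c r f g L \<tau> T \<le> max_starving n c r f g"
    by (rule max_starving_ge[OF assms(1) T(1)])
  ultimately show ?thesis
    by simp
qed

lemma obtain_departures_into_starvation:
  assumes "k \<le> n" and "n - k \<le> max_starving n c r f g"
  obtains L \<tau> where "leave_schedule n L \<tau>" and "card L = k"
    and "falls_into_starvation n c r f g L \<tau>"
proof -
  obtain L \<tau> T where L: "leave_schedule n L \<tau>" "after_departures L \<tau> T"
    and SN: "num_starving n c r f g L \<tau> T = max_starving n c r f g"
    by (rule max_starving_attained)
  let ?S = "{u. surviving n L u \<and> starves_from n c r f g L \<tau> T u}"
  have "n - k \<le> card ?S"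
    using assms(2) SN unfolding num_starving_def by simp
  then obtain S where S: "S \<subseteq> ?S" "card S = n - k" "finite S"
    by (rule obtain_subset_with_card_n)
  define T' where "T' = max T 0"
  define L' where "L' = {..<n} - S"
  define \<tau>' where "\<tau>' = (\<lambda>u. if u \<in> L then \<tau> u else T')"
  have "S \<subseteq> {..<n}" and "S \<inter> L = {}"
    using S(1) by (auto simp: surviving_def)
  then have "card L' = k"
    unfolding L'_def using S(2,3) assms(1) by (simp add: card_Diff_subset)
  have "L \<subseteq> L'"
    using L(1) \<open>S \<inter> L = {}\<close> unfolding L'_def leave_schedule_def by auto
  moreover have "after_departures L \<tau> T'"
    using L(2) unfolding after_departures_def T'_def by force
  moreover have "\<forall>u<n. u \<notin> L' \<longrightarrow> starves_from n c r f g L \<tau> T' u"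
    using S(1) unfolding L'_def T'_def starves_from_def by auto
  ultimately have "starvation_state n c r f g L' \<tau>' T'"
    by (intro starvation_state_extra_departures) (simp_all add: \<tau>'_def)
  moreover have "after_departures L' \<tau>' T'"
    using \<open>after_departures L \<tau> T'\<close> unfolding after_departures_def \<tau>'_def by simp
  moreover have "leave_schedule n L' \<tau>'"
    using L(1) unfolding leave_schedule_def L'_def \<tau>'_def T'_def by auto
  ultimately show ?thesis
    using that \<open>card L' = k\<close> unfolding falls_into_starvation_def by blast
qed

lemma isolation_resilience_eq:
  assumes "max_starving n c r f g < n"
  shows "isolation_resilience n c r f g = n - 1 - max_starving n c r f g"
proof -
  let ?SN = "max_starving n c r f g"
  have "{k. k \<le> n \<and> (\<forall>L \<tau>. leave_schedule n L \<tau> \<and> card L = k \<longrightarrow>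
                              \<not> falls_into_starvation n c r f g L \<tau>)} = {..< n - ?SN}"
  proof (intro set_eqI iffI)
    fix k
    assume "k \<in> {..< n - ?SN}"
    then show "k \<in> {k. k \<le> n \<and> (\<forall>L \<tau>. leave_schedule n L \<tau> \<and> card L = k \<longrightarrow>
                              \<not> falls_into_starvation n c r f g L \<tau>)}"
      using survivors_le_max_starving by fastforce
  next
    fix k
    assume "k \<in> {k. k \<le> n \<and> (\<forall>L \<tau>. leave_schedule n L \<tau> \<and> card L = k \<longrightarrow>
                              \<not> falls_into_starvation n c r f g L \<tau>)}"
    then have "k \<le> n" and avoided: "\<forall>L \<tau>. leave_schedule n L \<tau> \<and> card L = k \<longrightarrow>
                              \<not> falls_into_starvation n c r f g L \<tau>"
      by auto
    show "k \<in> {..< n - ?SN}"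
    proof (rule ccontr)
      assume "k \<notin> {..< n - ?SN}"
      then have "n - k \<le> ?SN"
        by simp
      then show False
        using obtain_departures_into_starvation[OF \<open>k \<le> n\<close>] avoided by blast
    qed
  qed
  moreover have "Max {..< n - ?SN} = n - 1 - ?SN"
    using assms by (intro Max_eqI) auto
  ultimately show ?thesis
    unfolding isolation_resilience_def by simp
qed

theorem lemma15:
  fixes n :: nat and c :: "nat \<Rightarrow> complex" and r :: real
    and f :: "nat \<Rightarrow> real" and g :: "nat \<Rightarrow> int"
  assumes "valid_system n c r"
    and "is_sync_schedule n c r f g"
    and "\<exists>i<n. \<exists>j<n. adj c r i j"
    and "\<forall>i<n. \<forall>j<n. \<forall>k<n. adj c r i j \<and> adj c r i k \<and> j \<noteq> k \<longrightarrow>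
           cis (link_pos c i j) \<noteq> cis (link_pos c i k)"
  shows "max_starving n c r f g + isolation_resilience n c r f g = n - 1"
proof -
  obtain i j where edge: "i < n" "j < n" "adj c r i j"
    using assms(3) by blast
  then have "g i = 1 \<or> g i = -1"
    using assms(2) unfolding is_sync_schedule_def by blast
  obtain L \<tau> T where "leave_schedule n L \<tau>"
    and "num_starving n c r f g L \<tau> T = max_starving n c r f g"
    by (rule max_starving_attained)
  then have "max_starving n c r f g \<le> n - 1"
    using num_starving_le \<open>g i = 1 \<or> g i = -1\<close> edge by metis
  then show ?thesis
    using isolation_resilience_eq[of n c r f g] edge(1) by simp
qed

end
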